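(* For each $n=1,2,\dots$ there is a function $f:\{-1,1\}^n\to \mathbb{R}$ with \[ \|f\|_2=1\le \|f\|_\infty\le\sqrt2,\qquad I(f)<1, \qquad \text{and}\qquad H(\hat f^2)>\frac{n}{n+1}\log n. \]
   Context: Equip $\{-1,1\}^n$ with the uniform (normalized counting) probability measure. For $g:\{-1,1\}^n\to\mathbb{C}$, $\|g\|_2^2=2^{-n}\sum_{\delta\in\{-1,1\}^n}|g(\delta)|^2$ and $\|g\|_\infty=\max_{\delta}|g(\delta)|$. Let $\varepsilon_i:\{-1,1\}^n\to\{-1,1\}$ be the $i$-th coordinate projection, and for $A\subseteq[n]=\{1,\dots,n\}$ let $W_A=\prod_{i\in A}\varepsilon_i$. The Fourier–Walsh coefficients are $\hat g(A)=2^{-n}\sum_{\delta\in\{-1,1\}^n} g(\delta)W_A(\delta)$, so $g=\sum_{A\subseteq[n]}\hat g(A)W_A$. The influence is $I(g)=\sum_{A\subseteq[n]}|\hat g(A)|^2|A|$, and the Fourier entropy is $H(|\hat g|^2)=-\sum_{A\subseteq[n]}|\hat g(A)|^2\log|\hat g(A)|^2$ with $0\log 0=0$ (for real $g$ this is written $H(\hat g^2)$). Logarithms are to base $2$. *)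

theory Defs
  imports "HOL-Analysis.Analysis"
begin

definition cube :: "nat \<Rightarrow> (nat \<Rightarrow> real) set" where
  "cube n = ({..<n} \<rightarrow>\<^sub>E {-1, 1})"

definition walsh :: "nat set \<Rightarrow> (nat \<Rightarrow> real) \<Rightarrow> real" where
  "walsh A d = (\<Prod>i\<in>A. d i)"

definition cube_avg :: "nat \<Rightarrow> ((nat \<Rightarrow> real) \<Rightarrow> real) \<Rightarrow> real" where
  "cube_avg n g = (\<Sum>d\<in>cube n. g d) / 2 ^ n"

definition norm2 :: "nat \<Rightarrow> ((nat \<Rightarrow> real) \<Rightarrow> real) \<Rightarrow> real" where
  "norm2 n g = sqrt (cube_avg n (\<lambda>d. (g d)\<^sup>2))"

definition norm_inf :: "nat \<Rightarrow> ((nat \<Rightarrow> real) \<Rightarrow> real) \<Rightarrow> real" where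
  "norm_inf n g = Max ((\<lambda>d. \<bar>g d\<bar>) ` cube n)"

definition fourier :: "nat \<Rightarrow> ((nat \<Rightarrow> real) \<Rightarrow> real) \<Rightarrow> nat set \<Rightarrow> real" where
  "fourier n g A = cube_avg n (\<lambda>d. g d * walsh A d)"

definition influence :: "nat \<Rightarrow> ((nat \<Rightarrow> real) \<Rightarrow> real) \<Rightarrow> real" where
  "influence n g = (\<Sum>A\<in>Pow {..<n}. (fourier n g A)\<^sup>2 * real (card A))"

definition fourier_entropy :: "nat \<Rightarrow> ((nat \<Rightarrow> real) \<Rightarrow> real) \<Rightarrow> real" where
  "fourier_entropy n g = - (\<Sum>A\<in>Pow {..<n}.
      (if fourier n g A = 0 then 0 else (fourier n g A)\<^sup>2 * log 2 ((fourier n g A)\<^sup>2)))"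

end

theory Submission
  imports Defs
begin

(* Let z(d) be the product over i < n of sqrt (1 - p) + i sqrt p d_i and f = Re z + Im z.
   Expanding the product, the Walsh coefficient of f at A is
   +-sqrt p ^ |A| * sqrt (1 - p) ^ (n - |A|), so the spectrum f^2 is the law of a random subset
   containing each coordinate independently with probability p: it has mass 1, mean size n p and
   entropy n h(p).  Every factor of z has modulus 1 on the cube, hence |f| <= sqrt 2 |z| = sqrt 2.
   For p = 1/(n+1) the influence is n/(n+1) < 1, and n h(p) > n p log (n+1) > n/(n+1) log n. *)

lemma finite_cube: "finite (cube n)"
  unfolding cube_def by (auto intro: finite_PiE)

lemma card_cube: "card (cube n) = 2 ^ n"
  unfolding cube_def by (simp add: card_PiE numeral_2_eq_2)

lemma cube_nonempty: "cube n \<noteq> {}"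
  unfolding cube_def by (simp add: PiE_eq_empty_iff)

lemma cube_coordinate: "d \<in> cube n \<Longrightarrow> i < n \<Longrightarrow> d i = -1 \<or> d i = 1"
  unfolding cube_def by (auto simp: PiE_def Pi_def)

lemma sum_walsh_cube:
  assumes "A \<subseteq> {..<n}"
  shows "(\<Sum>d\<in>cube n. walsh A d) = (if A = {} then 2 ^ n else 0)"
proof -
  have "walsh A d = (\<Prod>i<n. if i \<in> A then d i else 1)" for d
    using assms by (simp add: walsh_def prod.If_cases Int_absorb1)
  then have "(\<Sum>d\<in>cube n. walsh A d) = (\<Sum>d\<in>cube n. \<Prod>i<n. if i \<in> A then d i else 1)"
    by simp
  also have "\<dots> = (\<Prod>i<n. \<Sum>x\<in>{-1, 1::real}. if i \<in> A then x else 1)"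
    unfolding cube_def by (subst prod_sum_PiE) auto
  also have "\<dots> = (\<Prod>i<n. if i \<in> A then 0 else 2)"
    by (intro prod.cong) auto
  also have "\<dots> = (if A = {} then 2 ^ n else 0)"
    using assms by auto
  finally show ?thesis .
qed

lemma walsh_mult_walsh:
  assumes "d \<in> cube n" "A \<subseteq> {..<n}" "B \<subseteq> {..<n}"
  shows "walsh A d * walsh B d = walsh ((A - B) \<union> (B - A)) d"
proof -
  have fin: "finite A" "finite B"
    using assms(2,3) finite_subset by blast+
  have "(\<Prod>i\<in>A \<inter> B. d i) * (\<Prod>i\<in>A \<inter> B. d i) = (\<Prod>i\<in>A \<inter> B. d i * d i)"
    by (simp add: prod.distrib)
  also have "\<dots> = 1"
    using cube_coordinate[OF assms(1)] assms(2) by (intro prod.neutral) force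
  finally have square: "(\<Prod>i\<in>A \<inter> B. d i) * (\<Prod>i\<in>A \<inter> B. d i) = 1" .
  have "walsh A d = (\<Prod>i\<in>A - B. d i) * (\<Prod>i\<in>A \<inter> B. d i)"
    "walsh B d = (\<Prod>i\<in>B - A. d i) * (\<Prod>i\<in>A \<inter> B. d i)"
    "walsh ((A - B) \<union> (B - A)) d = (\<Prod>i\<in>A - B. d i) * (\<Prod>i\<in>B - A. d i)"
    unfolding walsh_def using fin
    by (subst prod.union_disjoint[symmetric]; auto intro: prod.cong)+
  then show ?thesis
    using square by (simp add: mult_ac)
qed

lemma fourier_walsh_expansion:
  assumes "A \<subseteq> {..<n}"
    and expansion: "\<And>d. d \<in> cube n \<Longrightarrow> g d = (\<Sum>B\<in>Pow {..<n}. a B * walsh B d)"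
  shows "fourier n g A = a A"
proof -
  have "(\<Sum>d\<in>cube n. g d * walsh A d)
      = (\<Sum>d\<in>cube n. \<Sum>B\<in>Pow {..<n}. a B * (walsh B d * walsh A d))"
    by (simp add: expansion sum_distrib_right mult.assoc)
  also have "\<dots> = (\<Sum>B\<in>Pow {..<n}. a B * (\<Sum>d\<in>cube n. walsh ((B - A) \<union> (A - B)) d))"
    using assms by (subst sum.swap) (auto simp: walsh_mult_walsh sum_distrib_left intro!: sum.cong)
  also have "\<dots> = (\<Sum>B\<in>Pow {..<n}. if B = A then a B * 2 ^ n else 0)"
    using assms by (intro sum.cong refl, subst sum_walsh_cube) auto
  also have "\<dots> = a A * 2 ^ n"
    using assms by simp
  finally show ?thesis
    by (simp add: fourier_def cube_avg_def)
qed

lemma parseval: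
  assumes expansion: "\<And>d. d \<in> cube n \<Longrightarrow> g d = (\<Sum>B\<in>Pow {..<n}. a B * walsh B d)"
  shows "cube_avg n (\<lambda>d. (g d)\<^sup>2) = (\<Sum>B\<in>Pow {..<n}. (a B)\<^sup>2)"
proof -
  have "(\<Sum>d\<in>cube n. (g d)\<^sup>2) = (\<Sum>d\<in>cube n. \<Sum>B\<in>Pow {..<n}. a B * (g d * walsh B d))"
    by (simp add: power2_eq_square expansion sum_distrib_left sum_distrib_right mult_ac
        cong: sum.cong)
  also have "\<dots> = (\<Sum>B\<in>Pow {..<n}. a B * (\<Sum>d\<in>cube n. g d * walsh B d))"
    by (subst sum.swap) (simp add: sum_distrib_left)
  also have "\<dots> = (\<Sum>B\<in>Pow {..<n}. a B * (2 ^ n * fourier n g B))"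
    by (simp add: fourier_def cube_avg_def)
  also have "\<dots> = 2 ^ n * (\<Sum>B\<in>Pow {..<n}. (a B)\<^sup>2)"
    using fourier_walsh_expansion[OF _ expansion]
    by (simp add: sum_distrib_left power2_eq_square mult_ac)
  finally show ?thesis
    by (simp add: cube_avg_def)
qed

lemma abs_le_norm_inf: "d \<in> cube n \<Longrightarrow> \<bar>g d\<bar> \<le> norm_inf n g"
  unfolding norm_inf_def by (simp add: finite_cube)

lemma norm_inf_le:
  assumes "\<And>d. d \<in> cube n \<Longrightarrow> \<bar>g d\<bar> \<le> M"
  shows "norm_inf n g \<le> M"
  unfolding norm_inf_def using assms finite_cube cube_nonempty by simp

lemma norm2_le_norm_inf: "norm2 n g \<le> norm_inf n g"
proof -
  obtain d0 where "d0 \<in> cube n"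
    using cube_nonempty by blast
  then have nonneg: "0 \<le> norm_inf n g"
    by (rule order_trans[OF abs_ge_zero abs_le_norm_inf])
  have "(g d)\<^sup>2 \<le> (norm_inf n g)\<^sup>2" if "d \<in> cube n" for d
    using abs_le_norm_inf[OF that] nonneg by (metis abs_le_square_iff abs_of_nonneg)
  then have "(\<Sum>d\<in>cube n. (g d)\<^sup>2) \<le> (\<Sum>d\<in>cube n. (norm_inf n g)\<^sup>2)"
    by (rule sum_mono)
  also have "\<dots> = 2 ^ n * (norm_inf n g)\<^sup>2"
    by (simp add: card_cube)
  finally have "(\<Sum>d\<in>cube n. (g d)\<^sup>2) \<le> 2 ^ n * (norm_inf n g)\<^sup>2" .
  then have "cube_avg n (\<lambda>d. (g d)\<^sup>2) \<le> (norm_inf n g)\<^sup>2"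
    by (simp add: cube_avg_def divide_le_eq mult.commute)
  then show ?thesis
    unfolding norm2_def by (rule real_le_lsqrt[OF nonneg])
qed

definition binomial_weight :: "real \<Rightarrow> 'a set \<Rightarrow> 'a set \<Rightarrow> real" where
  "binomial_weight p S A = p ^ card A * (1 - p) ^ card (S - A)"

lemma sum_binomial_weight:
  assumes "finite S"
  shows "(\<Sum>A\<in>Pow S. binomial_weight p S A) = 1"
  using prod_add[OF assms, of "\<lambda>_. p" "\<lambda>_. 1 - p"] by (simp add: binomial_weight_def)

lemma sum_binomial_weight_mem:
  assumes "finite S" "i \<in> S"
  shows "(\<Sum>A\<in>Pow S. if i \<in> A then binomial_weight p S A else 0) = p"
proof -
  \<comment> \<open>Replacing the factor 1 - p at i by 0 keeps exactly the sets containing i in the expansion.\<close>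
  have "(\<Prod>j\<in>S. p + (if j = i then 0 else 1 - p)) = (\<Prod>j\<in>S. if j = i then p else 1)"
    by (intro prod.cong) auto
  also have "\<dots> = p"
    using assms by simp
  finally have "p = (\<Sum>A\<in>Pow S. p ^ card A * (\<Prod>j\<in>S - A. if j = i then 0 else 1 - p))"
    using prod_add[OF assms(1), of "\<lambda>_. p" "\<lambda>j. if j = i then 0 else 1 - p"] by simp
  also have "\<dots> = (\<Sum>A\<in>Pow S. if i \<in> A then binomial_weight p S A else 0)"
  proof (intro sum.cong refl)
    fix A assume "A \<in> Pow S"
    show "p ^ card A * (\<Prod>j\<in>S - A. if j = i then 0 else 1 - p)
        = (if i \<in> A then binomial_weight p S A else 0)"
    proof (cases "i \<in> A")
      case True
      then have "(\<Prod>j\<in>S - A. if j = i then 0 else 1 - p) = (\<Prod>j\<in>S - A. 1 - p)"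
        by (intro prod.cong) auto
      with True show ?thesis
        by (simp add: binomial_weight_def)
    next
      case False
      with assms have "(\<Prod>j\<in>S - A. if j = i then 0 else 1 - p) = 0"
        by (intro prod_zero) auto
      with False show ?thesis
        by simp
    qed
  qed
  finally show ?thesis ..
qed

lemma sum_card_binomial_weight:
  assumes "finite S"
  shows "(\<Sum>A\<in>Pow S. real (card A) * binomial_weight p S A) = real (card S) * p"
proof -
  have "real (card A) * binomial_weight p S A
      = (\<Sum>i\<in>S. if i \<in> A then binomial_weight p S A else 0)" if "A \<in> Pow S" for A
    using that assms by (simp add: sum.If_cases Int_absorb1)
  then have "(\<Sum>A\<in>Pow S. real (card A) * binomial_weight p S A)
      = (\<Sum>A\<in>Pow S. \<Sum>i\<in>S. if i \<in> A then binomial_weight p S A else 0)"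
    by (rule sum.cong[OF refl])
  also have "\<dots> = (\<Sum>i\<in>S. \<Sum>A\<in>Pow S. if i \<in> A then binomial_weight p S A else 0)"
    by (rule sum.swap)
  also have "\<dots> = real (card S) * p"
    using assms by (simp add: sum_binomial_weight_mem)
  finally show ?thesis .
qed

lemma sum_binomial_weight_log:
  assumes "finite S" "0 < p" "p < 1"
  shows "(\<Sum>A\<in>Pow S. binomial_weight p S A * log b (binomial_weight p S A))
       = real (card S) * (p * log b p + (1 - p) * log b (1 - p))"
proof -
  let ?w = "binomial_weight p S"
  have log_weight: "log b (?w A)
      = real (card A) * log b p + (real (card S) - real (card A)) * log b (1 - p)"
    if "A \<in> Pow S" for A
    using that assms finite_subset[of A S]
    by (simp add: binomial_weight_def log_mult_pos log_nat_power card_Diff_subset card_mono)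
  have "(\<Sum>A\<in>Pow S. ?w A * log b (?w A))
      = (\<Sum>A\<in>Pow S. (log b p - log b (1 - p)) * (real (card A) * ?w A)
                      + real (card S) * log b (1 - p) * ?w A)"
    by (intro sum.cong refl, unfold log_weight) (simp_all add: algebra_simps)
  also have "\<dots> = (log b p - log b (1 - p)) * (real (card S) * p) + real (card S) * log b (1 - p)"
    using assms
    by (simp add: sum.distrib sum_card_binomial_weight sum_binomial_weight flip: sum_distrib_left)
  also have "\<dots> = real (card S) * (p * log b p + (1 - p) * log b (1 - p))"
    by (simp add: algebra_simps)
  finally show ?thesis .
qed

lemma card_lessThan_Diff: "A \<subseteq> {..<n} \<Longrightarrow> card ({..<n} - A) = n - card A"
  by (metis card_Diff_subset card_lessThan finite_lessThan finite_subset)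

definition riesz_product :: "real \<Rightarrow> nat \<Rightarrow> (nat \<Rightarrow> real) \<Rightarrow> complex" where
  "riesz_product p n d = (\<Prod>i<n. \<i> * of_real (sqrt p * d i) + of_real (sqrt (1 - p)))"

definition riesz_fn :: "real \<Rightarrow> nat \<Rightarrow> (nat \<Rightarrow> real) \<Rightarrow> real" where
  "riesz_fn p n d = Re (riesz_product p n d) + Im (riesz_product p n d)"

definition riesz_coeff :: "real \<Rightarrow> nat \<Rightarrow> nat set \<Rightarrow> real" where
  "riesz_coeff p n A =
     (Re (\<i> ^ card A) + Im (\<i> ^ card A)) * sqrt p ^ card A * sqrt (1 - p) ^ (n - card A)"

lemma riesz_fn_walsh_expansion:
  "riesz_fn p n d = (\<Sum>A\<in>Pow {..<n}. riesz_coeff p n A * walsh A d)"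
proof -
  have "riesz_product p n d = (\<Sum>A\<in>Pow {..<n}.
          \<i> ^ card A * of_real (sqrt p ^ card A * sqrt (1 - p) ^ (n - card A) * walsh A d))"
    unfolding riesz_product_def
  proof (subst prod_add, simp, intro sum.cong refl)
    fix A assume "A \<in> Pow {..<n}"
    then have "finite A" "card ({..<n} - A) = n - card A"
      by (auto intro: finite_subset simp: card_lessThan_Diff)
    then show "(\<Prod>i\<in>A. \<i> * of_real (sqrt p * d i)) * (\<Prod>i\<in>{..<n} - A. of_real (sqrt (1 - p)))
        = \<i> ^ card A * of_real (sqrt p ^ card A * sqrt (1 - p) ^ (n - card A) * walsh A d)"
      by (simp add: prod.distrib walsh_def mult_ac)
  qed
  then show ?thesis
    by (simp add: riesz_fn_def riesz_coeff_def algebra_simps flip: sum.distrib)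
qed

lemma fourier_riesz_fn: "A \<subseteq> {..<n} \<Longrightarrow> fourier n (riesz_fn p n) A = riesz_coeff p n A"
  by (rule fourier_walsh_expansion) (simp_all add: riesz_fn_walsh_expansion)

lemma re_plus_im_i_power_squared: "(Re (\<i> ^ k) + Im (\<i> ^ k))\<^sup>2 = 1"
proof -
  have "\<i> ^ k \<in> {1, \<i>, -1, -\<i>}"
    by (induction k) auto
  then show ?thesis
    by auto
qed

lemma riesz_coeff_squared:
  assumes "0 \<le> p" "p \<le> 1" "A \<subseteq> {..<n}"
  shows "(riesz_coeff p n A)\<^sup>2 = binomial_weight p {..<n} A"
proof -
  have "(sqrt x ^ k)\<^sup>2 = x ^ k" if "0 \<le> x" for x :: real and k
    using that by (simp flip: power_mult add: mult.commute[of k] power_mult)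
  then show ?thesis
    using assms
    by (simp add: card_lessThan_Diff riesz_coeff_def binomial_weight_def power_mult_distrib
        re_plus_im_i_power_squared)
qed

lemma abs_riesz_fn_le:
  assumes "0 \<le> p" "p \<le> 1" "d \<in> cube n"
  shows "\<bar>riesz_fn p n d\<bar> \<le> sqrt 2"
proof -
  have factor: "norm (\<i> * of_real (sqrt p * d i) + of_real (sqrt (1 - p))) = 1" if "i < n" for i
  proof -
    have "(d i)\<^sup>2 = 1"
      using cube_coordinate[OF assms(3) that] by auto
    with assms(1,2) show ?thesis
      by (simp add: cmod_def power_mult_distrib)
  qed
  have "norm (riesz_product p n d)
      = (\<Prod>i<n. norm (\<i> * of_real (sqrt p * d i) + of_real (sqrt (1 - p))))"
    unfolding riesz_product_def by (rule prod_norm[symmetric])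
  also have "\<dots> = 1"
    using factor by simp
  finally have "norm (riesz_product p n d) = 1" .
  then show ?thesis
    using complex_abs_le_norm[of "riesz_product p n d"] by (simp add: riesz_fn_def)
qed

lemma norm2_riesz_fn:
  assumes "0 \<le> p" "p \<le> 1"
  shows "norm2 n (riesz_fn p n) = 1"
proof -
  have "cube_avg n (\<lambda>d. (riesz_fn p n d)\<^sup>2) = (\<Sum>A\<in>Pow {..<n}. binomial_weight p {..<n} A)"
    using assms by (simp add: parseval riesz_fn_walsh_expansion riesz_coeff_squared)
  then show ?thesis
    by (simp add: norm2_def sum_binomial_weight)
qed

lemma influence_riesz_fn:
  assumes "0 \<le> p" "p \<le> 1"
  shows "influence n (riesz_fn p n) = real n * p"
proof -
  have "influence n (riesz_fn p n) = (\<Sum>A\<in>Pow {..<n}. real (card A) * binomial_weight p {..<n} A)"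
    unfolding influence_def
    using assms by (intro sum.cong refl) (simp add: fourier_riesz_fn riesz_coeff_squared)
  then show ?thesis
    by (simp add: sum_card_binomial_weight)
qed

lemma fourier_entropy_riesz_fn:
  assumes "0 < p" "p < 1"
  shows "fourier_entropy n (riesz_fn p n) = - real n * (p * log 2 p + (1 - p) * log 2 (1 - p))"
proof -
  have "fourier_entropy n (riesz_fn p n)
      = - (\<Sum>A\<in>Pow {..<n}. binomial_weight p {..<n} A * log 2 (binomial_weight p {..<n} A))"
    unfolding fourier_entropy_def
  proof (intro arg_cong[where f = uminus] sum.cong refl)
    fix A assume "A \<in> Pow {..<n}"
    then have square: "(fourier n (riesz_fn p n) A)\<^sup>2 = binomial_weight p {..<n} A"
      and "binomial_weight p {..<n} A > 0"
      using assms by (simp_all add: fourier_riesz_fn riesz_coeff_squared binomial_weight_def)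
    then have "fourier n (riesz_fn p n) A \<noteq> 0"
      by auto
    then show "(if fourier n (riesz_fn p n) A = 0 then 0
                else (fourier n (riesz_fn p n) A)\<^sup>2 * log 2 ((fourier n (riesz_fn p n) A)\<^sup>2))
        = binomial_weight p {..<n} A * log 2 (binomial_weight p {..<n} A)"
      by (simp add: square)
  qed
  then show ?thesis
    using assms by (simp add: sum_binomial_weight_log)
qed

theorem theorem1:
  fixes n :: nat
  assumes "n \<ge> 1"
  shows "\<exists>f :: (nat \<Rightarrow> real) \<Rightarrow> real.
           norm2 n f = 1 \<and> 1 \<le> norm_inf n f \<and> norm_inf n f \<le> sqrt 2 \<and>
           influence n f < 1 \<and>
           fourier_entropy n f > real n / real (n + 1) * log 2 (real n)"
proof (intro exI conjI)
  define p where "p = 1 / real (n + 1)"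
  have p: "0 < p" "p < 1"
    using assms by (simp_all add: p_def)
  show norm2: "norm2 n (riesz_fn p n) = 1"
    using p by (simp add: norm2_riesz_fn)
  show "1 \<le> norm_inf n (riesz_fn p n)"
    using norm2_le_norm_inf norm2 by metis
  show "norm_inf n (riesz_fn p n) \<le> sqrt 2"
    using p by (intro norm_inf_le abs_riesz_fn_le) simp_all
  show "influence n (riesz_fn p n) < 1"
    using p by (simp add: influence_riesz_fn p_def)
  have "fourier_entropy n (riesz_fn p n)
      = real n * p * log 2 (real (n + 1)) - real n * ((1 - p) * log 2 (1 - p))"
    using p by (simp add: fourier_entropy_riesz_fn p_def log_divide algebra_simps)
  moreover have "real n * p * log 2 (real n) < real n * p * log 2 (real (n + 1))"
    using assms p by (intro mult_strict_left_mono) simp_all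
  moreover have "real n * ((1 - p) * log 2 (1 - p)) < 0"
    using assms p by (intro mult_pos_neg mult_pos_neg) simp_all
  ultimately show "fourier_entropy n (riesz_fn p n) > real n / real (n + 1) * log 2 (real n)"
    by (simp add: p_def)
qed

end
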